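(* Let $2\le i\le n/3$, let $\alpha,\beta$ be conjugacy classes of $S_n$ with $a_j=b_j$ for $j<i$ and $a_i\ne b_i$, and for $0\le k\le i-1$ put $r_k=1-\frac{i(n-i+k+1)}{\binom n2}$. If $t\ge \frac{n^2(\log(i-1)+1)}{i}$, then $\Big|(a_i-b_i)\binom ni\sum_{k=1}^{i-1}(-1)^k\binom{i-1}{k}\frac{n-2i+k+1}{n-i+k+1}r_k^t\Big|\le\frac12\,|a_i-b_i|\binom ni\frac{n-2i+1}{n-i+1}r_0^t.$ That is, the combined contribution of the partitions $[n-i,i-k,1^k]$, $1\le k\le i-1$, to the Fourier expansion of $P^{*t}(\alpha)-P^{*t}(\beta)$ for the random transposition walk is at most half, in absolute value, of the contribution of $[n-i,i]$.
   Context: $\log$ is the natural logarithm. $a_j$ (resp. $b_j$) is the number of $j$-cycles of the class $\alpha$ (resp. $\beta$). The random transposition walk on $S_n$ starts at the identity and at each step multiplies by a uniformly random transposition; $P^{*t}(\alpha)$ is the probability of any fixed element of class $\alpha$ after $t$ steps, and $P^{*t}(\alpha)-P^{*t}(\beta)=\frac1{n!}\sum_\lambda(\chi_\lambda(\alpha)-\chi_\lambda(\beta))d_\lambda\big(\chi_\lambda(\tau)/d_\lambda\big)^t$. *)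

theory Defs
  imports "HOL-Analysis.Analysis" "HOL-Combinatorics.Permutations"
begin

definition perm_orbit :: "(nat \<Rightarrow> nat) \<Rightarrow> nat \<Rightarrow> nat set" where
  "perm_orbit \<sigma> x = {(\<sigma> ^^ m) x | m. True}"

text \<open>Number of j-cycles of a permutation sigma of {1..n} (fixed points are 1-cycles).
  This is a class function, so it is the a_j of the conjugacy class of sigma.\<close>
definition num_cycles :: "nat \<Rightarrow> (nat \<Rightarrow> nat) \<Rightarrow> nat \<Rightarrow> nat" where
  "num_cycles n \<sigma> j = card {C. \<exists>x\<in>{1..n}. C = perm_orbit \<sigma> x \<and> card C = j}"

definition rk :: "nat \<Rightarrow> nat \<Rightarrow> nat \<Rightarrow> real" where
  "rk n i k = 1 - real i * (real n - real i + real k + 1) / real (n choose 2)"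

end

theory Submission
  imports Defs
begin

text \<open>With \<open>N = n choose 2\<close> one has exactly \<open>r\<^sub>k = r\<^sub>0 - i k / N \<le> r\<^sub>0 exp (-i k / N)\<close>. The lower
  bound on \<open>t\<close> gives \<open>i t / N \<ge> 2 (ln (i - 1) + 1)\<close>, so \<open>r\<^sub>k\<^sup>t \<le> r\<^sub>0\<^sup>t (e\<^sup>-\<^sup>2 / (i - 1)\<^sup>2)\<^sup>k\<close>; this
  absorbs \<open>(i - 1 choose k) \<le> (i - 1)\<^sup>k\<close>, and the ratio factors lie in \<open>[0, 1]\<close>. Hence the
  \<open>k\<close>-th summand is at most \<open>r\<^sub>0\<^sup>t e\<^sup>-\<^sup>2\<^sup>k \<le> r\<^sub>0\<^sup>t 5\<^sup>-\<^sup>k\<close>, the whole sum at most \<open>r\<^sub>0\<^sup>t / 4\<close>, while the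
  ratio factor of \<open>[n - i, i]\<close> is at least \<open>1 / 2\<close> because \<open>n \<ge> 3 i\<close>.\<close>

lemma real_choose_two: "real (n choose 2) = real n * (real n - 1) / 2"
proof -
  have "even (n * (n - 1))" by auto
  then have "real (n * (n - 1) div 2) = real (n * (n - 1)) / 2"
    by (simp add: real_of_nat_div)
  then show ?thesis by (cases n) (auto simp: choose_two algebra_simps)
qed

lemma exp_two_ge_five: "exp (2::real) \<ge> 5"
proof -
  have "(3/2::real) ^ 4 \<le> exp (1/2) ^ 4"
    using exp_ge_add_one_self[of "1/2::real"] by (intro power_mono) simp_all
  also have "exp (1/2::real) ^ 4 = exp 2"
    by (simp add: exp_of_nat_mult[symmetric])
  finally show ?thesis by (simp add: eval_nat_numeral)
qed

lemma sum_inverse_five_powers_le: "(\<Sum>k=1..m. (1/5::real) ^ k) \<le> 1/4"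
proof -
  have "4 * (\<Sum>k=1..m. (1/5::real) ^ k) = 1 - (1/5) ^ m"
    by (induction m) (simp_all add: algebra_simps)
  moreover have "(1/5::real) ^ m \<ge> 0" by simp
  ultimately show ?thesis by linarith
qed

lemma rk_eq_rk0_minus: "rk n i k = rk n i 0 - real i * real k / real (n choose 2)"
  unfolding rk_def by (simp add: distrib_left add_divide_distrib)

lemma rk_le_one:
  assumes "i \<le> n + 1"
  shows "rk n i k \<le> 1"
  using assms unfolding rk_def by (simp add: divide_nonneg_nonneg)

lemma rk_nonneg:
  assumes "2 * i < n" and "k < i"
  shows "rk n i k \<ge> 0"
proof -
  have "real i * (real n - real i + real k + 1) \<le> real i * real n"
    using assms by (intro mult_left_mono) auto
  also have "\<dots> \<le> real n * (real n - 1) / 2"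
    using assms mult_left_mono[of "2 * real i" "real n - 1" "real n"] by auto
  finally show ?thesis
    using assms unfolding rk_def real_choose_two by simp
qed

lemma rk_power_le_exp:
  assumes "2 * i < n" and "k < i"
  shows "rk n i k ^ t \<le> rk n i 0 ^ t * exp (- (real i * real k * real t / real (n choose 2)))"
proof -
  define x where "x = real i * real k / real (n choose 2)"
  have r0: "0 \<le> rk n i 0" "rk n i 0 \<le> 1"
    using assms by (auto intro: rk_nonneg rk_le_one)
  have "0 \<le> x" unfolding x_def by simp
  then have "rk n i k \<le> rk n i 0 * (1 - x)"
    using rk_eq_rk0_minus[of n i k] r0 mult_left_mono[of "rk n i 0" 1 x]
    unfolding x_def by (simp add: algebra_simps)
  also have "\<dots> \<le> rk n i 0 * exp (- x)"
    using r0 exp_ge_add_one_self[of "- x"] by (intro mult_left_mono) auto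
  finally have "rk n i k ^ t \<le> (rk n i 0 * exp (- x)) ^ t"
    using rk_nonneg[OF assms] by (intro power_mono) auto
  then show ?thesis
    by (simp add: x_def power_mult_distrib exp_of_nat_mult[symmetric] algebra_simps)
qed

lemma exp_decay_le_of_time_bound:
  assumes "2 \<le> i" and "2 \<le> n"
    and "real t \<ge> real n ^ 2 * (ln (real i - 1) + 1) / real i"
  shows "exp (- (real i * real k * real t / real (n choose 2)))
           \<le> (exp (-2) / (real i - 1) ^ 2) ^ k"
proof -
  define L where "L = ln (real i - 1) + 1"
  define N where "N = real (n choose 2)"
  have N: "N > 0" "real n ^ 2 \<ge> 2 * N"
    using assms(2) by (auto simp: N_def real_choose_two power2_eq_square algebra_simps)
  have "L \<ge> 1" using assms(1) by (simp add: L_def)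
  have "real i * real t \<ge> real n ^ 2 * L"
    using assms(1,3) by (simp add: L_def field_simps)
  then have "real i * real t \<ge> 2 * N * L"
    using mult_right_mono[OF N(2), of L] \<open>L \<ge> 1\<close> by linarith
  then have "real k * (2 * L) \<le> real k * (real i * real t / N)"
    using N(1) by (intro mult_left_mono) (simp_all add: field_simps)
  then have "exp (- (real i * real k * real t / N)) \<le> exp (-2 * L) ^ k"
    by (simp add: exp_of_nat_mult[symmetric] algebra_simps)
  also have "exp (-2 * L) = exp (-2) / exp (ln (real i - 1)) ^ 2"
    by (simp add: L_def algebra_simps exp_diff exp_of_nat_mult[symmetric])
  also have "exp (ln (real i - 1)) = real i - 1"
    using assms(1) by simp
  finally show ?thesis by (simp add: N_def)
qed

lemma summand_le:
  assumes "2 \<le> i" and "2 * i < n" and "k < i"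
    and "real t \<ge> real n ^ 2 * (ln (real i - 1) + 1) / real i"
  shows "real ((i - 1) choose k) *
           ((real n - 2 * real i + real k + 1) / (real n - real i + real k + 1)) * rk n i k ^ t
         \<le> rk n i 0 ^ t * exp (-2) ^ k"
proof -
  have i1: "real i - 1 \<ge> 1" using assms(1) by simp
  have ratio: "(real n - 2 * real i + real k + 1) / (real n - real i + real k + 1) \<in> {0..1}"
    using assms(2) by (auto simp: divide_le_eq)
  have "real ((i - 1) choose k) \<le> real ((i - 1) ^ k)"
    using assms(3) by (simp only: of_nat_le_iff) (intro binomial_le_pow, simp)
  then have binom: "real ((i - 1) choose k) \<le> (real i - 1) ^ k"
    using assms(1) by (simp add: of_nat_diff)
  have "(real i - 1) * (exp (-2) / (real i - 1) ^ 2) = exp (-2) / (real i - 1)"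
    using i1 by (simp add: power2_eq_square)
  also have "\<dots> \<le> exp (-2)" using i1 by (simp add: divide_le_eq)
  finally have absorb: "(real i - 1) * (exp (-2) / (real i - 1) ^ 2) \<le> exp (-2)" .
  have "real ((i - 1) choose k) *
          ((real n - 2 * real i + real k + 1) / (real n - real i + real k + 1)) * rk n i k ^ t
        \<le> real ((i - 1) choose k) * rk n i k ^ t"
    using ratio rk_nonneg[OF assms(2) assms(3)]
    by (intro mult_right_mono mult_left_le) auto
  also have "\<dots> \<le> (real i - 1) ^ k * (rk n i 0 ^ t * (exp (-2) / (real i - 1) ^ 2) ^ k)"
  proof (rule mult_mono[OF binom])
    have "rk n i k ^ t
          \<le> rk n i 0 ^ t * exp (- (real i * real k * real t / real (n choose 2)))"
      using assms(2) assms(3) by (rule rk_power_le_exp)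
    also have "\<dots> \<le> rk n i 0 ^ t * (exp (-2) / (real i - 1) ^ 2) ^ k"
      using assms rk_nonneg[OF assms(2), of 0]
      by (intro mult_left_mono exp_decay_le_of_time_bound) auto
    finally show "rk n i k ^ t \<le> rk n i 0 ^ t * (exp (-2) / (real i - 1) ^ 2) ^ k" .
  qed (use i1 rk_nonneg[OF assms(2) assms(3)] in auto)
  also have "\<dots> = rk n i 0 ^ t * ((real i - 1) * (exp (-2) / (real i - 1) ^ 2)) ^ k"
    by (simp only: power_mult_distrib mult_ac)
  also have "\<dots> \<le> rk n i 0 ^ t * exp (-2) ^ k"
    using absorb i1 rk_nonneg[OF assms(2), of 0] assms(1)
    by (intro mult_left_mono power_mono) auto
  finally show ?thesis .
qed

lemma alternating_sum_le:
  assumes "2 \<le> i" and "3 * i \<le> n"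
    and "real t \<ge> real n ^ 2 * (ln (real i - 1) + 1) / real i"
  shows "\<bar>\<Sum>k=1..i-1. (-1) ^ k * real ((i - 1) choose k) *
            ((real n - 2 * real i + real k + 1) / (real n - real i + real k + 1)) * rk n i k ^ t\<bar>
         \<le> 1/2 * ((real n - 2 * real i + 1) / (real n - real i + 1)) * rk n i 0 ^ t"
proof -
  define a where "a k = real ((i - 1) choose k) *
    ((real n - 2 * real i + real k + 1) / (real n - real i + real k + 1)) * rk n i k ^ t" for k
  have r0: "rk n i 0 \<ge> 0" using assms by (intro rk_nonneg) auto
  have e2: "exp (-2::real) \<le> 1/5"
    using exp_two_ge_five by (simp add: exp_minus inverse_eq_divide divide_le_eq)
  have "\<bar>\<Sum>k=1..i-1. (-1) ^ k * a k\<bar> \<le> (\<Sum>k=1..i-1. \<bar>(-1) ^ k * a k\<bar>)"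
    by (rule sum_abs)
  also have "\<dots> = (\<Sum>k=1..i-1. \<bar>a k\<bar>)"
    by (simp add: abs_mult power_abs)
  also have "\<dots> \<le> (\<Sum>k=1..i-1. rk n i 0 ^ t * (1/5) ^ k)"
  proof (rule sum_mono)
    fix k assume k: "k \<in> {1..i-1}"
    have "\<bar>a k\<bar> = a k"
      unfolding a_def using k assms rk_nonneg[of i n k] by (intro abs_of_nonneg) auto
    also have "\<dots> \<le> rk n i 0 ^ t * exp (-2) ^ k"
      unfolding a_def using k assms by (intro summand_le) auto
    also have "\<dots> \<le> rk n i 0 ^ t * (1/5) ^ k"
      using e2 r0 by (intro mult_left_mono power_mono) auto
    finally show "\<bar>a k\<bar> \<le> rk n i 0 ^ t * (1/5) ^ k" .
  qed
  also have "\<dots> = rk n i 0 ^ t * (\<Sum>k=1..i-1. (1/5) ^ k)"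
    by (rule sum_distrib_left[symmetric])
  also have "\<dots> \<le> rk n i 0 ^ t * (1/4)"
    using sum_inverse_five_powers_le r0 by (intro mult_left_mono) auto
  also have "\<dots> \<le> 1/2 * ((real n - 2 * real i + 1) / (real n - real i + 1)) * rk n i 0 ^ t"
  proof -
    have "1/2 \<le> (real n - 2 * real i + 1) / (real n - real i + 1)"
      using assms(2) by (simp add: le_divide_eq)
    then have "1/4 \<le> 1/2 * ((real n - 2 * real i + 1) / (real n - real i + 1))" by linarith
    from mult_left_mono[OF this zero_le_power[OF r0, of t]] show ?thesis
      by (simp only: mult_ac)
  qed
  finally show ?thesis by (simp add: a_def mult.assoc)
qed

theorem lemma5p7:
  fixes n i t :: nat and \<sigma> \<tau> :: "nat \<Rightarrow> nat"
  assumes "2 \<le> i" and "3 * i \<le> n"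
    and "\<sigma> permutes {1..n}" and "\<tau> permutes {1..n}"
    and "\<forall>j. 1 \<le> j \<and> j < i \<longrightarrow> num_cycles n \<sigma> j = num_cycles n \<tau> j"
    and "num_cycles n \<sigma> i \<noteq> num_cycles n \<tau> i"
    and "real t \<ge> real n ^ 2 * (ln (real i - 1) + 1) / real i"
  shows "\<bar>(real (num_cycles n \<sigma> i) - real (num_cycles n \<tau> i)) * real (n choose i) *
            (\<Sum>k=1..i-1. (-1) ^ k * real ((i - 1) choose k) *
               ((real n - 2 * real i + real k + 1) / (real n - real i + real k + 1)) * rk n i k ^ t)\<bar>
         \<le> 1/2 * \<bar>real (num_cycles n \<sigma> i) - real (num_cycles n \<tau> i)\<bar> * real (n choose i) *
            ((real n - 2 * real i + 1) / (real n - real i + 1)) * rk n i 0 ^ t"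
proof -
  define d where "d = \<bar>real (num_cycles n \<sigma> i) - real (num_cycles n \<tau> i)\<bar> * real (n choose i)"
  have "d \<ge> 0" unfolding d_def by simp
  from mult_left_mono[OF alternating_sum_le[OF assms(1,2,7)] this]
  show ?thesis unfolding d_def by (simp add: abs_mult mult_ac)
qed

end
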